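(* Let $a, n \in \mathbb{N}$ and let $(F, M, \mathcal{R}, c)$ be an instance of the feasibility problem such that one of the following holds: (i) $c_r \in \{a, na\}$ for all $r \in \mathcal{R}$ and $R_a \ge n-1$; or (ii) $c_r \in \{a, 2a, \dots, na\}$ for all $r \in \mathcal{R}$ and $R_{ia} > 0$ for every $i = 1, \dots, n$; or (iii) $c_r \in \{2^0 a, 2^1 a, \dots, 2^n a\}$ for all $r \in \mathcal{R}$ and $R_{2^i a} > 0$ for every $i = 0, \dots, n$. Then the instance is feasible if and only if $$\left\lceil \frac{F}{a} \right\rceil + \left\lceil \frac{M}{a} \right\rceil \le \frac{1}{a} \sum_{r \in \mathcal{R}} c_r.$$
   Context: An instance $(F, M, \mathcal{R}, c)$ of the feasibility problem (of patient-to-room assignment with gender separation, for a single time period) consists of nonnegative integers $F$ (number of female patients) and $M$ (number of male patients), a finite set $\mathcal{R}$ of rooms, and a capacity $c_r \in \mathbb{N}$ (positive integer) for each room $r \in \mathcal{R}$. The instance is called feasible if there exists a subset $S \subseteq \mathcal{R}$ with $\sum_{r \in S} c_r \ge F$ and $\sum_{r \in \mathcal{R} \setminus S} c_r \ge M$. For $k \in \mathbb{N}$, $R_k := |\{ r \in \mathcal{R} : c_r = k\}|$ denotes the number of rooms of capacity $k$. *)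

theory Defs
  imports Complex_Main
begin

definition valid_instance :: "'r set \<Rightarrow> ('r \<Rightarrow> nat) \<Rightarrow> bool" where
  "valid_instance R c \<longleftrightarrow> finite R \<and> (\<forall>r\<in>R. c r > 0)"

definition feasible :: "nat \<Rightarrow> nat \<Rightarrow> 'r set \<Rightarrow> ('r \<Rightarrow> nat) \<Rightarrow> bool" where
  "feasible F M R c \<longleftrightarrow> (\<exists>S\<subseteq>R. sum c S \<ge> F \<and> sum c (R - S) \<ge> M)"

definition num_rooms :: "'r set \<Rightarrow> ('r \<Rightarrow> nat) \<Rightarrow> nat \<Rightarrow> nat" where
  "num_rooms R c k = card {r\<in>R. c r = k}"

end

theory Submission
  imports Defs
begin

text \<open>Divide all capacities by \<open>a\<close>. Under each of the three hypotheses the resulting room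
sizes form a complete family: every number up to their total is the total size of some set of
rooms. This holds because, listed in increasing order, each size exceeds the sum of the smaller
ones by at most one. For a complete family of sizes, an instance is feasible iff the demands
fit into the total capacity, and after dividing by \<open>a\<close> the demands become
\<open>\<lceil>F/a\<rceil>\<close> and \<open>\<lceil>M/a\<rceil>\<close>.\<close>

definition subset_sum_complete :: "'r set \<Rightarrow> ('r \<Rightarrow> nat) \<Rightarrow> bool" where
  "subset_sum_complete A d \<longleftrightarrow> (\<forall>v \<le> sum d A. \<exists>S\<subseteq>A. sum d S = v)"

lemma subset_sum_complete_empty: "subset_sum_complete {} d"
  unfolding subset_sum_complete_def by auto

lemma subset_sum_complete_insert:
  assumes "finite A" and "subset_sum_complete A d" and "x \<notin> A" and "d x \<le> sum d A + 1"
  shows "subset_sum_complete (insert x A) d"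
  unfolding subset_sum_complete_def
proof (intro allI impI)
  fix v assume v: "v \<le> sum d (insert x A)"
  show "\<exists>S\<subseteq>insert x A. sum d S = v"
  proof (cases "v \<le> sum d A")
    case True
    then show ?thesis
      using \<open>subset_sum_complete A d\<close> unfolding subset_sum_complete_def by blast
  next
    case False
    then have "v - d x \<le> sum d A" and "d x \<le> v"
      using v assms(1,3,4) by auto
    then obtain S where S: "S \<subseteq> A" "sum d S = v - d x"
      using \<open>subset_sum_complete A d\<close> unfolding subset_sum_complete_def by blast
    moreover have "x \<notin> S"
      using S(1) \<open>x \<notin> A\<close> by blast
    ultimately have "sum d (insert x S) = v"
      using \<open>d x \<le> v\<close> finite_subset[OF S(1) \<open>finite A\<close>] by simp
    with S show ?thesis by blast
  qed
qed

lemma subset_sum_complete_if_le_smaller_sum: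
  assumes "finite A" and "\<forall>x\<in>A. d x \<le> sum d {y\<in>A. d y < d x} + 1"
  shows "subset_sum_complete A d"
  using assms
proof (induction A rule: finite_ranking_induct[where f = d])
  case empty
  show ?case by (rule subset_sum_complete_empty)
next
  case (insert x A)
  show ?case
  proof (cases "x \<in> A")
    case True
    then show ?thesis using insert by (simp add: insert_absorb)
  next
    case False
    have smaller: "{z\<in>insert x A. d z < d y} = {z\<in>A. d z < d y}" if "y \<in> A" for y
      using insert.hyps(2)[OF that] by auto
    have "subset_sum_complete A d"
      using insert.IH insert.prems smaller by simp
    moreover have "sum d {z\<in>insert x A. d z < d x} \<le> sum d A"
      using insert.hyps(1) by (intro sum_mono2) auto
    ultimately show ?thesis
      using subset_sum_complete_insert[OF insert.hyps(1) _ False] insert.prems by fastforce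
  qed
qed

lemma subset_sum_complete_if_many_ones:
  assumes "finite A" and "\<forall>x\<in>A. d x \<le> m + 1" and "num_rooms A d 1 \<ge> m"
  shows "subset_sum_complete A d"
proof (rule subset_sum_complete_if_le_smaller_sum[OF \<open>finite A\<close>], intro ballI)
  fix x assume "x \<in> A"
  show "d x \<le> sum d {y\<in>A. d y < d x} + 1"
  proof (cases "d x \<le> 1")
    case False
    have "num_rooms A d 1 = sum d {y\<in>A. d y = 1}"
      unfolding num_rooms_def by simp
    also have "\<dots> \<le> sum d {y\<in>A. d y < d x}"
      using False \<open>finite A\<close> by (intro sum_mono2) auto
    finally show ?thesis
      using assms(2,3) \<open>x \<in> A\<close> by fastforce
  qed simp
qed

lemma num_rooms_pos_iff:
  assumes "finite A"
  shows "num_rooms A d k > 0 \<longleftrightarrow> (\<exists>x\<in>A. d x = k)"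
  using assms unfolding num_rooms_def by (auto simp: card_gt_0_iff)

lemma subset_sum_complete_if_consecutive:
  assumes "finite A" and "\<forall>x\<in>A. d x \<le> n" and "\<forall>i\<in>{1..<n}. num_rooms A d i > 0"
  shows "subset_sum_complete A d"
proof (rule subset_sum_complete_if_le_smaller_sum[OF \<open>finite A\<close>], intro ballI)
  fix x assume "x \<in> A"
  show "d x \<le> sum d {y\<in>A. d y < d x} + 1"
  proof (cases "d x \<le> 1")
    case False
    then have "d x - 1 \<in> {1..<n}"
      using assms(2) \<open>x \<in> A\<close> by fastforce
    then obtain y where y: "y \<in> A" "d y = d x - 1"
      using assms(3) num_rooms_pos_iff[OF \<open>finite A\<close>] by blast
    then have "d y \<le> sum d {z\<in>A. d z < d x}"
      using False \<open>finite A\<close> by (intro member_le_sum) auto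
    with y show ?thesis by linarith
  qed simp
qed

lemma subset_sum_complete_if_powers_of_two:
  assumes "finite A" and "\<forall>x\<in>A. d x \<in> {2 ^ i | i. i \<le> n}"
    and "\<forall>i<n. num_rooms A d (2 ^ i) > 0"
  shows "subset_sum_complete A d"
proof (rule subset_sum_complete_if_le_smaller_sum[OF \<open>finite A\<close>], intro ballI)
  fix x assume "x \<in> A"
  then obtain i where i: "d x = 2 ^ i" "i \<le> n"
    using assms(2) by blast
  let ?B = "{y\<in>A. d y < d x}"
  have "(\<lambda>j. (2::nat) ^ j) ` {..<i} \<subseteq> d ` ?B"
  proof
    fix v :: nat assume "v \<in> (\<lambda>j. 2 ^ j) ` {..<i}"
    then obtain j where j: "j < i" "v = 2 ^ j" by blast
    then have "num_rooms A d (2 ^ j) > 0"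
      using assms(3) i(2) by simp
    then obtain y where "y \<in> A" "d y = 2 ^ j"
      using num_rooms_pos_iff[OF \<open>finite A\<close>] by blast
    moreover have "d y < d x"
      using \<open>d y = 2 ^ j\<close> i(1) j(1) by simp
    ultimately show "v \<in> d ` ?B"
      using j(2) by (intro image_eqI[of _ d y]) auto
  qed
  then have "sum id ((\<lambda>j. (2::nat) ^ j) ` {..<i}) \<le> sum id (d ` ?B)"
    using \<open>finite A\<close> by (intro sum_mono2) auto
  also have "\<dots> \<le> sum d ?B"
    using sum_image_le[of ?B id d] \<open>finite A\<close> by simp
  finally have "(\<Sum>j<i. (2::nat) ^ j) \<le> sum d ?B"
    by (simp add: sum.reindex inj_on_def)
  moreover have "(\<Sum>j<i. (2::nat) ^ j) + 1 = (2::nat) ^ i"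
    using sum_power2[of i] by (simp add: atLeast0LessThan)
  ultimately show "d x \<le> sum d ?B + 1"
    using i(1) by linarith
qed

lemma feasible_iff_le_sum:
  assumes "finite R" and "subset_sum_complete R d"
  shows "feasible F M R d \<longleftrightarrow> F + M \<le> sum d R"
proof
  assume "feasible F M R d"
  then obtain S where "S \<subseteq> R" "F \<le> sum d S" "M \<le> sum d (R - S)"
    unfolding feasible_def by blast
  then show "F + M \<le> sum d R"
    using sum.subset_diff[OF \<open>S \<subseteq> R\<close> \<open>finite R\<close>, of d] by linarith
next
  assume "F + M \<le> sum d R"
  then have "F \<le> sum d R" by simp
  then obtain S where S: "S \<subseteq> R" "sum d S = F"
    using \<open>subset_sum_complete R d\<close> unfolding subset_sum_complete_def by blast
  then have "M \<le> sum d (R - S)"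
    using \<open>F + M \<le> sum d R\<close> sum.subset_diff[OF \<open>S \<subseteq> R\<close> \<open>finite R\<close>, of d] by linarith
  with S show "feasible F M R d"
    unfolding feasible_def by auto
qed

lemma le_mult_iff_nat_ceiling_divide:
  assumes "a > 0"
  shows "G \<le> a * k \<longleftrightarrow> nat \<lceil>real G / real a\<rceil> \<le> k"
proof -
  have "nat \<lceil>real G / real a\<rceil> \<le> k \<longleftrightarrow> real G \<le> real a * real k"
    using assms by (simp add: divide_le_eq mult.commute)
  also have "\<dots> \<longleftrightarrow> G \<le> a * k"
    by (metis of_nat_le_iff of_nat_mult)
  finally show ?thesis by simp
qed

lemma feasible_scale:
  assumes "a > 0" and "\<forall>r\<in>R. c r = a * d r"
  shows "feasible F M R c \<longleftrightarrow>
    feasible (nat \<lceil>real F / real a\<rceil>) (nat \<lceil>real M / real a\<rceil>) R d"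
proof -
  have "sum c S = a * sum d S" if "S \<subseteq> R" for S
    using assms(2) that by (auto simp: sum_distrib_left intro!: sum.cong)
  then show ?thesis
    unfolding feasible_def le_mult_iff_nat_ceiling_divide[OF assms(1), symmetric]
    by (metis Diff_subset)
qed

lemma feasible_iff_ceiling_le_sum:
  assumes "finite R" and "a > 0" and c_eq: "\<forall>r\<in>R. c r = a * d r"
    and "subset_sum_complete R d"
  shows "feasible F M R c \<longleftrightarrow>
    real_of_int (\<lceil>real F / real a\<rceil> + \<lceil>real M / real a\<rceil>) \<le> (1 / real a) * (\<Sum>r\<in>R. real (c r))"
proof -
  have ceiling_nonneg: "\<lceil>real G / real a\<rceil> \<ge> 0" for G :: nat
    by (metis ceiling_mono ceiling_zero divide_nonneg_nonneg of_nat_0_le_iff)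
  have "feasible F M R c \<longleftrightarrow> nat \<lceil>real F / real a\<rceil> + nat \<lceil>real M / real a\<rceil> \<le> sum d R"
    using feasible_scale[OF \<open>a > 0\<close> c_eq] feasible_iff_le_sum[OF assms(1,4)] by simp
  also have "\<dots> \<longleftrightarrow> real_of_int (\<lceil>real F / real a\<rceil> + \<lceil>real M / real a\<rceil>) \<le> real (sum d R)"
    using ceiling_nonneg[of F] ceiling_nonneg[of M] by linarith
  also have "real (sum d R) = (1 / real a) * (\<Sum>r\<in>R. real (c r))"
    using \<open>a > 0\<close> c_eq by (simp add: sum_distrib_left)
  finally show ?thesis .
qed

lemma num_rooms_scale:
  assumes "a > 0" and "\<forall>r\<in>R. c r = a * d r"
  shows "num_rooms R c (k * a) = num_rooms R d k"
proof -
  have "{r\<in>R. c r = k * a} = {r\<in>R. d r = k}"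
    using assms by (auto simp: mult.commute)
  then show ?thesis unfolding num_rooms_def by simp
qed

theorem mainTheorem2:
  fixes F M a n :: nat and R :: "'r set" and c :: "'r \<Rightarrow> nat"
  assumes inst: "valid_instance R c"
    and a_pos: "a \<ge> 1"
    and cases: "((\<forall>r\<in>R. c r \<in> {a, n * a}) \<and> num_rooms R c a \<ge> n - 1)
              \<or> ((\<forall>r\<in>R. c r \<in> {i * a | i. 1 \<le> i \<and> i \<le> n}) \<and> (\<forall>i\<in>{1..n}. num_rooms R c (i * a) > 0))
              \<or> ((\<forall>r\<in>R. c r \<in> {2 ^ i * a | i. i \<le> n}) \<and> (\<forall>i\<in>{0..n}. num_rooms R c (2 ^ i * a) > 0))"
  shows "feasible F M R c \<longleftrightarrow>
    real_of_int (\<lceil>real F / real a\<rceil> + \<lceil>real M / real a\<rceil>) \<le> (1 / real a) * (\<Sum>r\<in>R. real (c r))"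
proof -
  have fin: "finite R" and a: "a > 0"
    using inst a_pos unfolding valid_instance_def by auto
  define d where "d r = c r div a" for r
  have c_eq: "\<forall>r\<in>R. c r = a * d r"
    using cases unfolding d_def by auto
  note rooms = num_rooms_scale[OF a c_eq]
  have "subset_sum_complete R d"
    using cases
  proof (elim disjE conjE)
    assume "\<forall>r\<in>R. c r \<in> {a, n * a}" "n - 1 \<le> num_rooms R c a"
    then show ?thesis
      using subset_sum_complete_if_many_ones[OF fin, of d "n - 1"] rooms[of 1] c_eq a by force
  next
    assume "\<forall>r\<in>R. c r \<in> {i * a | i. 1 \<le> i \<and> i \<le> n}" "\<forall>i\<in>{1..n}. 0 < num_rooms R c (i * a)"
    then show ?thesis
      using subset_sum_complete_if_consecutive[OF fin, of d n] rooms c_eq a by force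
  next
    assume "\<forall>r\<in>R. c r \<in> {2 ^ i * a | i. i \<le> n}" "\<forall>i\<in>{0..n}. 0 < num_rooms R c (2 ^ i * a)"
    then show ?thesis
      using subset_sum_complete_if_powers_of_two[OF fin, of d n] rooms c_eq a by force
  qed
  then show ?thesis
    using feasible_iff_ceiling_le_sum[OF fin a c_eq] by blast
qed

end
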